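(* Let $H$ be a finite graph with an edge $(x,y)$ such that $\mathrm{Aut}(H;xy)\ne\mathrm{Aut}(H;x,y)$. Then for every positive integer $k$, $$D_2(H,k;xy)=\binom{k}{2}\frac{D(H,k;x,y)}{k^2}\quad\text{and}\quad D_1(H,k;xy)=D(H,k;xy)-\frac{(k-1)\,D(H,k;x,y)}{2k}.$$
   Context: A $k$-labeling of $H$ is a map $\phi:V(H)\to\{1,\dots,k\}$; an automorphism $\pi$ preserves $\phi$ if $\phi(\pi(v))=\phi(v)$ for all $v$. For a subgroup $\Gamma\le\mathrm{Aut}(H)$, $\phi$ is $\Gamma$-distinguishing if the only element of $\Gamma$ preserving $\phi$ is the identity; $\phi,\phi'$ are equivalent with respect to $\Gamma$ if some $\pi\in\Gamma$ satisfies $\phi'(\pi(v))=\phi(v)$ for all $v$; $D(H,k;\Gamma)$ is the number of $\Gamma$-equivalence classes of $\Gamma$-distinguishing $k$-labelings. $\mathrm{Aut}(H;x,y)$ is the group of automorphisms fixing both $x$ and $y$; $\mathrm{Aut}(H;xy)$ is the group of automorphisms mapping the set $\{x,y\}$ to itself. $D(H,k;x,y):=D(H,k;\mathrm{Aut}(H;x,y))$, $D(H,k;xy):=D(H,k;\mathrm{Aut}(H;xy))$. $D_1(H,k;xy)$ (resp. $D_2(H,k;xy)$) is the number of those $\mathrm{Aut}(H;xy)$-equivalence classes of $\mathrm{Aut}(H;xy)$-distinguishing $k$-labelings in which $x$ and $y$ receive the same label (resp. different labels). *)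

theory Defs
  imports Complex_Main "HOL-Library.FuncSet"
begin

definition graph :: "'a set \<Rightarrow> ('a \<Rightarrow> 'a \<Rightarrow> bool) \<Rightarrow> bool" where
  "graph V E \<longleftrightarrow> finite V \<and> (\<forall>u v. E u v \<longrightarrow> u \<in> V \<and> v \<in> V)
     \<and> (\<forall>u v. E u v \<longrightarrow> E v u) \<and> (\<forall>v. \<not> E v v)"

definition Aut :: "'a set \<Rightarrow> ('a \<Rightarrow> 'a \<Rightarrow> bool) \<Rightarrow> ('a \<Rightarrow> 'a) set" where
  "Aut V E = {\<pi>. bij_betw \<pi> V V \<and> (\<forall>v. v \<notin> V \<longrightarrow> \<pi> v = v)
                 \<and> (\<forall>u\<in>V. \<forall>v\<in>V. E u v \<longleftrightarrow> E (\<pi> u) (\<pi> v))}"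

definition Aut_fix2 :: "'a set \<Rightarrow> ('a \<Rightarrow> 'a \<Rightarrow> bool) \<Rightarrow> 'a \<Rightarrow> 'a \<Rightarrow> ('a \<Rightarrow> 'a) set" where
  "Aut_fix2 V E x y = {\<pi> \<in> Aut V E. \<pi> x = x \<and> \<pi> y = y}"

definition Aut_set2 :: "'a set \<Rightarrow> ('a \<Rightarrow> 'a \<Rightarrow> bool) \<Rightarrow> 'a \<Rightarrow> 'a \<Rightarrow> ('a \<Rightarrow> 'a) set" where
  "Aut_set2 V E x y = {\<pi> \<in> Aut V E. \<pi> ` {x, y} = {x, y}}"

definition labelings :: "'a set \<Rightarrow> nat \<Rightarrow> ('a \<Rightarrow> nat) set" where
  "labelings V k = V \<rightarrow>\<^sub>E {1..k}"

definition preserves :: "'a set \<Rightarrow> ('a \<Rightarrow> 'a) \<Rightarrow> ('a \<Rightarrow> nat) \<Rightarrow> bool" where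
  "preserves V \<pi> \<phi> \<longleftrightarrow> (\<forall>v\<in>V. \<phi> (\<pi> v) = \<phi> v)"

definition distinguishing :: "'a set \<Rightarrow> ('a \<Rightarrow> 'a) set \<Rightarrow> ('a \<Rightarrow> nat) \<Rightarrow> bool" where
  "distinguishing V \<Gamma> \<phi> \<longleftrightarrow> (\<forall>\<pi>\<in>\<Gamma>. preserves V \<pi> \<phi> \<longrightarrow> (\<forall>v\<in>V. \<pi> v = v))"

definition equiv_lab :: "'a set \<Rightarrow> ('a \<Rightarrow> 'a) set \<Rightarrow> ('a \<Rightarrow> nat) \<Rightarrow> ('a \<Rightarrow> nat) \<Rightarrow> bool" where
  "equiv_lab V \<Gamma> \<phi> \<phi>' \<longleftrightarrow> (\<exists>\<pi>\<in>\<Gamma>. \<forall>v\<in>V. \<phi>' (\<pi> v) = \<phi> v)"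

definition dist_classes :: "'a set \<Rightarrow> nat \<Rightarrow> ('a \<Rightarrow> 'a) set \<Rightarrow> ('a \<Rightarrow> nat) set set" where
  "dist_classes V k \<Gamma> =
     {\<phi> \<in> labelings V k. distinguishing V \<Gamma> \<phi>} // {(\<phi>, \<phi>'). equiv_lab V \<Gamma> \<phi> \<phi>'}"

definition D :: "'a set \<Rightarrow> nat \<Rightarrow> ('a \<Rightarrow> 'a) set \<Rightarrow> nat" where
  "D V k \<Gamma> = card (dist_classes V k \<Gamma>)"

definition D_fix2 :: "'a set \<Rightarrow> ('a \<Rightarrow> 'a \<Rightarrow> bool) \<Rightarrow> nat \<Rightarrow> 'a \<Rightarrow> 'a \<Rightarrow> nat" where
  "D_fix2 V E k x y = D V k (Aut_fix2 V E x y)"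

definition D_set2 :: "'a set \<Rightarrow> ('a \<Rightarrow> 'a \<Rightarrow> bool) \<Rightarrow> nat \<Rightarrow> 'a \<Rightarrow> 'a \<Rightarrow> nat" where
  "D_set2 V E k x y = D V k (Aut_set2 V E x y)"

definition D1 :: "'a set \<Rightarrow> ('a \<Rightarrow> 'a \<Rightarrow> bool) \<Rightarrow> nat \<Rightarrow> 'a \<Rightarrow> 'a \<Rightarrow> nat" where
  "D1 V E k x y = card {C \<in> dist_classes V k (Aut_set2 V E x y). \<forall>\<phi>\<in>C. \<phi> x = \<phi> y}"

definition D2 :: "'a set \<Rightarrow> ('a \<Rightarrow> 'a \<Rightarrow> bool) \<Rightarrow> nat \<Rightarrow> 'a \<Rightarrow> 'a \<Rightarrow> nat" where
  "D2 V E k x y = card {C \<in> dist_classes V k (Aut_set2 V E x y). \<forall>\<phi>\<in>C. \<phi> x \<noteq> \<phi> y}"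

end

theory Submission
  imports Defs "HOL-Combinatorics.Permutations"
begin

(* Aut(H;x,y) is the pointwise stabiliser of {x, y} inside the setwise stabiliser Aut(H;xy);
   when they differ, it has index 2, the other coset consisting of the automorphisms that swap
   x and y.  A permutation group acts freely on its distinguishing labelings, so every count D
   is a number of distinguishing labelings divided by the order of the group.  A labeling with
   different labels on x and y is Aut(H;xy)-distinguishing iff it is Aut(H;x,y)-distinguishing,
   and since Aut(H;x,y) fixes x and y, its distinguishing labelings are closed under changing
   the labels of x and y arbitrarily; hence exactly a fraction (k - 1)/k of them separate x and y.
   This gives 2 k D_2 = (k - 1) D(H,k;x,y).  Whether x and y get equal labels is constant on
   Aut(H;xy)-classes, so D(H,k;xy) = D_1 + D_2. *)

section \<open>Permutation groups\<close>

definition perm_group :: "'a set \<Rightarrow> ('a \<Rightarrow> 'a) set \<Rightarrow> bool" where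
  "perm_group V G \<longleftrightarrow> id \<in> G \<and> (\<forall>p\<in>G. p permutes V)
     \<and> (\<forall>p\<in>G. \<forall>q\<in>G. p \<circ> q \<in> G) \<and> (\<forall>p\<in>G. inv p \<in> G)"

lemma
  assumes "perm_group V G"
  shows perm_group_id: "id \<in> G"
    and perm_group_permutes: "p \<in> G \<Longrightarrow> p permutes V"
    and perm_group_comp: "p \<in> G \<Longrightarrow> q \<in> G \<Longrightarrow> p \<circ> q \<in> G"
    and perm_group_inv: "p \<in> G \<Longrightarrow> inv p \<in> G"
  using assms unfolding perm_group_def by blast+

lemma finite_perm_group: "perm_group V G \<Longrightarrow> finite V \<Longrightarrow> finite G"
  using finite_permutations perm_group_permutes by (metis finite_subset mem_Collect_eq subsetI)

lemma perm_group_setwise_stabilizer: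
  assumes "perm_group V G"
  shows "perm_group V {p \<in> G. p ` A = A}"
proof -
  have "inv p ` A = A" if "p \<in> G" "p ` A = A" for p
    using that perm_group_permutes[OF assms] by (metis image_inv_f_f permutes_inj)
  moreover have "(p \<circ> q) ` A = A" if "p ` A = A" "q ` A = A" for p q :: "'a \<Rightarrow> 'a"
    using that by (metis image_comp)
  ultimately show ?thesis
    using assms unfolding perm_group_def by auto
qed

lemma perm_group_pointwise_stabilizer:
  assumes "perm_group V G"
  shows "perm_group V {p \<in> G. \<forall>a\<in>A. p a = a}"
proof -
  have "inv p a = a" if "p \<in> G" "p a = a" for p a
    using that perm_group_permutes[OF assms] by (metis permutes_inverses(2))
  then show ?thesis
    using assms unfolding perm_group_def by auto
qed

lemma Aut_eq: "Aut V E = {p. p permutes V \<and> (\<forall>u\<in>V. \<forall>v\<in>V. E u v \<longleftrightarrow> E (p u) (p v))}"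
  unfolding Aut_def by (auto intro: bij_imp_permutes permutes_imp_bij permutes_not_in)

lemma perm_group_Aut: "perm_group V (Aut V E)"
proof -
  have "p \<circ> q \<in> Aut V E" if p: "p \<in> Aut V E" and q: "q \<in> Aut V E" for p q
  proof -
    have "q u \<in> V" if "u \<in> V" for u
      using q that by (simp add: Aut_eq permutes_in_image)
    then show ?thesis
      using p q permutes_compose[of q V p] by (simp add: Aut_eq)
  qed
  moreover have "inv p \<in> Aut V E" if p: "p \<in> Aut V E" for p
  proof -
    have perm: "p permutes V" and edges: "\<forall>u\<in>V. \<forall>v\<in>V. E u v \<longleftrightarrow> E (p u) (p v)"
      using p by (simp_all add: Aut_eq)
    have "E u v \<longleftrightarrow> E (inv p u) (inv p v)" if "u \<in> V" "v \<in> V" for u v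
      using edges[rule_format, of "inv p u" "inv p v"] that
      by (simp add: permutes_in_image[OF permutes_inv[OF perm]] permutes_inverses(1)[OF perm])
    then show ?thesis
      using permutes_inv[OF perm] by (simp add: Aut_eq)
  qed
  moreover have "id \<in> Aut V E" and "\<forall>p\<in>Aut V E. p permutes V"
    by (simp_all add: Aut_eq)
  ultimately show ?thesis
    unfolding perm_group_def by blast
qed

lemma Aut_fix2_eq: "Aut_fix2 V E x y = {p \<in> Aut_set2 V E x y. p x = x \<and> p y = y}"
  unfolding Aut_fix2_def Aut_set2_def by auto

lemma perm_group_Aut_set2: "perm_group V (Aut_set2 V E x y)"
  unfolding Aut_set2_def by (rule perm_group_setwise_stabilizer[OF perm_group_Aut])

lemma perm_group_Aut_fix2: "perm_group V (Aut_fix2 V E x y)"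
  using perm_group_pointwise_stabilizer[OF perm_group_Aut_set2, of V E x y "{x, y}"]
  by (simp add: Aut_fix2_eq)

lemma Aut_set2_stabilizes: "\<forall>p\<in>Aut_set2 V E x y. p ` {x, y} = {x, y}"
  by (simp add: Aut_set2_def)

section \<open>Labelings up to a permutation group\<close>

definition relabel :: "'a set \<Rightarrow> ('a \<Rightarrow> nat) \<Rightarrow> ('a \<Rightarrow> 'a) \<Rightarrow> 'a \<Rightarrow> nat" where
  "relabel V \<phi> p = restrict (\<phi> \<circ> p) V"

(* The classes of lab_equiv consist of arbitrary functions, whose values outside V are
   unconstrained; they are therefore counted through their traces on sets of labelings. *)
definition lab_equiv :: "'a set \<Rightarrow> ('a \<Rightarrow> 'a) set \<Rightarrow> (('a \<Rightarrow> nat) \<times> ('a \<Rightarrow> nat)) set" where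
  "lab_equiv V G = {(\<phi>, \<phi>'). equiv_lab V G \<phi> \<phi>'}"

lemma finite_labelings: "finite V \<Longrightarrow> finite (labelings V k)"
  by (simp add: labelings_def finite_PiE)

lemma dist_classes_eq:
  "dist_classes V k G = {\<phi> \<in> labelings V k. distinguishing V G \<phi>} // lab_equiv V G"
  unfolding dist_classes_def lab_equiv_def ..

lemma lab_equiv_iff: "(\<phi>, \<psi>) \<in> lab_equiv V G \<longleftrightarrow> (\<exists>p\<in>G. \<forall>v\<in>V. \<psi> (p v) = \<phi> v)"
  by (simp add: lab_equiv_def equiv_lab_def)

lemma permutes_transfer_inv:
  assumes p: "p permutes V" and \<psi>: "\<forall>v\<in>V. \<psi> (p v) = \<phi> v" and "v \<in> V"
  shows "\<phi> (inv p v) = \<psi> v"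
proof -
  have "inv p v \<in> V"
    using p \<open>v \<in> V\<close> by (simp add: permutes_in_image permutes_inv)
  then have "\<phi> (inv p v) = \<psi> (p (inv p v))"
    using \<psi> by simp
  also have "\<dots> = \<psi> v"
    using permutes_inverses(1)[OF p] by simp
  finally show ?thesis .
qed

lemma equiv_lab_equiv:
  assumes G: "perm_group V G"
  shows "equiv UNIV (lab_equiv V G)"
proof (rule equivI)
  show "refl (lab_equiv V G)"
    using perm_group_id[OF G] by (auto simp: refl_on_def lab_equiv_iff intro!: bexI[of _ id])
  show "sym (lab_equiv V G)"
  proof (rule symI)
    fix \<phi> \<psi> assume "(\<phi>, \<psi>) \<in> lab_equiv V G"
    then obtain p where p: "p \<in> G" and \<psi>: "\<forall>v\<in>V. \<psi> (p v) = \<phi> v"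
      by (auto simp: lab_equiv_iff)
    have "\<phi> (inv p v) = \<psi> v" if "v \<in> V" for v
      using permutes_transfer_inv[OF perm_group_permutes[OF G p] \<psi> that] .
    then show "(\<psi>, \<phi>) \<in> lab_equiv V G"
      using perm_group_inv[OF G p] by (auto simp: lab_equiv_iff)
  qed
  show "trans (lab_equiv V G)"
  proof (rule transI)
    fix \<phi> \<psi> \<chi> assume "(\<phi>, \<psi>) \<in> lab_equiv V G" "(\<psi>, \<chi>) \<in> lab_equiv V G"
    then obtain p q where "p \<in> G" "\<forall>v\<in>V. \<psi> (p v) = \<phi> v" "q \<in> G" "\<forall>v\<in>V. \<chi> (q v) = \<psi> v"
      by (auto simp: lab_equiv_iff)
    then show "(\<phi>, \<chi>) \<in> lab_equiv V G"
      using perm_group_comp[OF G] perm_group_permutes[OF G]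
      by (auto simp: lab_equiv_iff permutes_in_image intro!: bexI[of _ "q \<circ> p"])
  qed
qed simp

lemma distinguishing_lab_equiv:
  assumes G: "perm_group V G" and "(\<phi>, \<psi>) \<in> lab_equiv V G" and \<phi>: "distinguishing V G \<phi>"
  shows "distinguishing V G \<psi>"
  unfolding distinguishing_def
proof (intro ballI impI)
  obtain p where p: "p \<in> G" and \<psi>: "\<forall>v\<in>V. \<psi> (p v) = \<phi> v"
    using assms(2) by (auto simp: lab_equiv_iff)
  have perm: "p permutes V" using perm_group_permutes[OF G p] .
  fix t v assume t: "t \<in> G" and "preserves V t \<psi>" and v: "v \<in> V"
  have t_in: "t w \<in> V" if "w \<in> V" for w
    using perm_group_permutes[OF G t] that by (simp add: permutes_in_image)
  have \<phi>_inv: "\<phi> (inv p u) = \<psi> u" if "u \<in> V" for u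
    using permutes_transfer_inv[OF perm \<psi> that] .
  let ?s = "inv p \<circ> t \<circ> p"
  have "preserves V ?s \<phi>"
    unfolding preserves_def
  proof
    fix w assume w: "w \<in> V"
    have "\<phi> (?s w) = \<psi> (t (p w))"
      using \<phi>_inv t_in w perm by (simp add: permutes_in_image)
    also have "\<dots> = \<phi> w"
      using \<open>preserves V t \<psi>\<close> \<psi> w perm by (simp add: preserves_def permutes_in_image)
    finally show "\<phi> (?s w) = \<phi> w" .
  qed
  moreover have "?s \<in> G"
    using G p t by (simp add: perm_group_comp perm_group_inv)
  ultimately have "\<forall>w\<in>V. ?s w = w"
    using \<phi> unfolding distinguishing_def by blast
  moreover have "inv p v \<in> V"
    using v perm by (simp add: permutes_in_image permutes_inv)
  ultimately have "inv p (t v) = inv p v"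
    using permutes_inverses(1)[OF perm] by force
  then have "p (inv p (t v)) = p (inv p v)"
    by simp
  then show "t v = v"
    using permutes_inverses(1)[OF perm] by simp
qed

lemma distinguishing_respects_lab_equiv:
  assumes "perm_group V G"
  shows "distinguishing V G respects lab_equiv V G"
proof (rule congruentI)
  fix \<phi> \<psi> assume "(\<phi>, \<psi>) \<in> lab_equiv V G"
  moreover have "(\<psi>, \<phi>) \<in> lab_equiv V G"
    using calculation equiv_lab_equiv[OF assms] by (meson equivE symD)
  ultimately show "distinguishing V G \<phi> = distinguishing V G \<psi>"
    using distinguishing_lab_equiv[OF assms] by blast
qed

lemma lab_equiv_class_labelings:
  assumes G: "perm_group V G" and \<phi>: "\<phi> \<in> labelings V k"
  shows "lab_equiv V G `` {\<phi>} \<inter> labelings V k = relabel V \<phi> ` G"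
proof (intro equalityI subsetI)
  fix \<psi> assume "\<psi> \<in> lab_equiv V G `` {\<phi>} \<inter> labelings V k"
  then obtain p where p: "p \<in> G" "\<forall>v\<in>V. \<psi> (p v) = \<phi> v" and \<psi>: "\<psi> \<in> labelings V k"
    by (auto simp: lab_equiv_iff)
  have perm: "p permutes V" using perm_group_permutes[OF G p(1)] .
  have "\<psi> v = \<phi> (inv p v)" if "v \<in> V" for v
    using permutes_transfer_inv[OF perm p(2) that] by simp
  then have "\<psi> = relabel V \<phi> (inv p)"
    using \<psi> by (auto simp: relabel_def labelings_def PiE_def extensional_def)
  then show "\<psi> \<in> relabel V \<phi> ` G"
    using perm_group_inv[OF G p(1)] by blast
next
  fix \<psi> assume "\<psi> \<in> relabel V \<phi> ` G"
  then obtain p where p: "p \<in> G" and \<psi>: "\<psi> = relabel V \<phi> p" by blast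
  have perm: "p permutes V" using perm_group_permutes[OF G p] .
  have "\<forall>v\<in>V. \<psi> (inv p v) = \<phi> v"
    using perm by (simp add: \<psi> relabel_def permutes_in_image permutes_inv permutes_inverses(1))
  moreover have "\<psi> \<in> labelings V k"
    using \<phi> perm by (auto simp: \<psi> relabel_def labelings_def permutes_in_image)
  ultimately show "\<psi> \<in> lab_equiv V G `` {\<phi>} \<inter> labelings V k"
    using perm_group_inv[OF G p] by (auto simp: lab_equiv_iff)
qed

lemma inj_on_relabel:
  assumes G: "perm_group V G" and \<phi>: "distinguishing V G \<phi>"
  shows "inj_on (relabel V \<phi>) G"
proof
  fix p q assume p: "p \<in> G" and q: "q \<in> G" and eq: "relabel V \<phi> p = relabel V \<phi> q"
  have perm: "p permutes V" "q permutes V"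
    using perm_group_permutes[OF G] p q by auto
  have "\<phi> (p v) = \<phi> (q v)" if "v \<in> V" for v
    using eq that by (metis comp_apply relabel_def restrict_apply')
  then have "preserves V (p \<circ> inv q) \<phi>"
    using perm by (simp add: preserves_def permutes_in_image permutes_inv permutes_inverses(1))
  moreover have "p \<circ> inv q \<in> G"
    using G p q by (simp add: perm_group_comp perm_group_inv)
  ultimately have "p (inv q w) = w" if "w \<in> V" for w
    using \<phi> that unfolding distinguishing_def by auto
  then have "p v = q v" if "v \<in> V" for v
  proof -
    have "q v \<in> V"
      using that perm(2) by (simp add: permutes_in_image)
    then have "p (inv q (q v)) = q v"
      by fact
    then show ?thesis
      using permutes_inverses(2)[OF perm(2)] by simp
  qed
  then show "p = q"
    using permutes_not_in[OF perm(1)] permutes_not_in[OF perm(2)] by (metis ext)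
qed

lemma card_lab_equiv_class:
  assumes "perm_group V G" "\<phi> \<in> labelings V k" "distinguishing V G \<phi>"
  shows "card (lab_equiv V G `` {\<phi>} \<inter> labelings V k) = card G"
  using assms by (simp add: lab_equiv_class_labelings card_image inj_on_relabel)

lemma card_eq_sum_quotient:
  assumes R: "equiv UNIV R" and "finite A"
  shows "card A = (\<Sum>X\<in>A // R. card (X \<inter> A))"
proof -
  have U: "(\<Union>X\<in>A // R. X \<inter> A) = A"
    using equiv_class_self[OF R] by (auto simp: quotient_def)
  have "finite (A // R)"
    using \<open>finite A\<close> unfolding quotient_def by simp
  moreover have "X \<inter> Y = {}" if "X \<in> A // R" "Y \<in> A // R" "X \<noteq> Y" for X Y
    using quotient_disj[OF R, of X Y] that by (auto simp: quotient_def)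
  ultimately have "card (\<Union>X\<in>A // R. X \<inter> A) = (\<Sum>X\<in>A // R. card (X \<inter> A))"
    using \<open>finite A\<close> by (intro card_UN_disjoint) auto
  then show ?thesis
    unfolding U .
qed

lemma card_distinguishing_eq_card_quotient_mult:
  fixes k :: nat
  assumes G: "perm_group V G" and "finite V" and P: "P respects lab_equiv V G"
  defines "A \<equiv> {\<phi> \<in> labelings V k. distinguishing V G \<phi> \<and> P \<phi>}"
  shows "card A = card (A // lab_equiv V G) * card G"
proof -
  let ?R = "lab_equiv V G"
  have "finite A"
    unfolding A_def using finite_labelings[OF \<open>finite V\<close>] by simp
  have "card (X \<inter> A) = card G" if "X \<in> A // ?R" for X
  proof -
    obtain \<phi> where \<phi>: "\<phi> \<in> A" and X: "X = ?R `` {\<phi>}"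
      using \<open>X \<in> A // ?R\<close> by (auto elim: quotientE)
    have "X \<inter> A = X \<inter> labelings V k"
      using \<phi> congruentD[OF P] congruentD[OF distinguishing_respects_lab_equiv[OF G]]
      unfolding X A_def by auto
    then show ?thesis
      using card_lab_equiv_class[OF G] \<phi> unfolding X A_def by simp
  qed
  then show ?thesis
    using card_eq_sum_quotient[OF equiv_lab_equiv[OF G] \<open>finite A\<close>] by simp
qed

lemma Not_respects: "P respects R \<Longrightarrow> (\<lambda>a. \<not> P a) respects R"
  by (simp add: congruent_def split_beta)

lemma quotient_filter:
  assumes R: "equiv UNIV R" and P: "P respects R"
  shows "{X \<in> A // R. \<forall>a\<in>X. P a} = {a \<in> A. P a} // R"
proof (intro equalityI subsetI)
  fix X assume "X \<in> {X \<in> A // R. \<forall>a\<in>X. P a}"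
  then obtain a where "a \<in> A" "X = R `` {a}" "\<forall>b\<in>X. P b"
    by (auto elim: quotientE)
  then show "X \<in> {a \<in> A. P a} // R"
    using equiv_class_self[OF R, of a] by (auto intro: quotientI)
next
  fix X assume "X \<in> {a \<in> A. P a} // R"
  then obtain a where "a \<in> A" "P a" "X = R `` {a}"
    by (auto elim: quotientE)
  then show "X \<in> {X \<in> A // R. \<forall>a\<in>X. P a}"
    using congruentD[OF P] by (auto intro: quotientI)
qed

lemma card_quotient_split:
  assumes R: "equiv UNIV R" and P: "P respects R" and "finite A"
  shows "card (A // R) = card {X \<in> A // R. \<forall>a\<in>X. P a} + card {X \<in> A // R. \<forall>a\<in>X. \<not> P a}"
    (is "_ = card ?Q1 + card ?Q2")
proof -
  have "A // R = ?Q1 \<union> ?Q2"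
  proof (intro equalityI subsetI)
    fix X assume "X \<in> A // R"
    then obtain a where "X = R `` {a}"
      by (rule quotientE)
    then show "X \<in> ?Q1 \<union> ?Q2"
      using \<open>X \<in> A // R\<close> congruentD[OF P, of a] by auto
  qed auto
  then have "card (A // R) = card (?Q1 \<union> ?Q2)"
    by (rule arg_cong)
  moreover have "X \<notin> ?Q2" if "X \<in> ?Q1" for X
  proof -
    have "X \<in> A // R"
      using that by simp
    then obtain a where "X = R `` {a}"
      by (rule quotientE)
    then have "a \<in> X"
      using equiv_class_self[OF R] by simp
    then show ?thesis
      using that by auto
  qed
  moreover have "finite (A // R)"
    using \<open>finite A\<close> unfolding quotient_def by simp
  ultimately show ?thesis
    by (simp add: card_Un_disjoint disjoint_iff)
qed

section \<open>The two stabilisers of an edge\<close>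

lemma eq_labels_respects_lab_equiv:
  assumes "x \<in> V" "y \<in> V" and stab: "\<forall>p\<in>G. p ` {x, y} = {x, y}"
  shows "(\<lambda>\<phi>. \<phi> x = \<phi> y) respects lab_equiv V G"
proof (rule congruentI)
  fix \<phi> \<psi> assume "(\<phi>, \<psi>) \<in> lab_equiv V G"
  then obtain p where p: "p \<in> G" and \<psi>: "\<forall>v\<in>V. \<psi> (p v) = \<phi> v"
    by (auto simp: lab_equiv_iff)
  have "\<phi> x = \<psi> (p x)" "\<phi> y = \<psi> (p y)"
    using \<psi> assms(1,2) by simp_all
  moreover have "p x = x \<and> p y = y \<or> p x = y \<and> p y = x"
    using stab p by (simp add: doubleton_eq_iff)
  ultimately show "(\<phi> x = \<phi> y) = (\<psi> x = \<psi> y)"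
    by auto
qed

lemma bij_betw_comp_pointwise_stabilizer:
  assumes G: "perm_group V G" and "x \<noteq> y"
    and stab: "\<forall>p\<in>G. p ` {x, y} = {x, y}" and s: "s \<in> G" "s x = y"
  defines "F \<equiv> {p \<in> G. p x = x \<and> p y = y}"
  shows "bij_betw ((\<circ>) s) F (G - F)"
proof -
  have swap: "p x = y \<and> p y = x" if "p \<in> G" "p \<notin> F" for p
    using stab that by (auto simp: F_def doubleton_eq_iff)
  have perm_s: "s permutes V"
    using perm_group_permutes[OF G s(1)] .
  have "s y = x"
    using swap[OF s(1)] s(2) \<open>x \<noteq> y\<close> by (auto simp: F_def)
  then have inv_s: "inv s y = x" "inv s x = y"
    using s(2) by (simp_all add: permutes_inv_eq[OF perm_s])
  show ?thesis
  proof (rule bij_betw_byWitness[where f' = "(\<circ>) (inv s)"])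
    show "\<forall>p\<in>F. inv s \<circ> (s \<circ> p) = p"
      by (simp add: o_assoc permutes_inv_o(2)[OF perm_s])
    show "\<forall>q\<in>G - F. s \<circ> (inv s \<circ> q) = q"
      by (simp add: o_assoc permutes_inv_o(1)[OF perm_s])
    show "(\<circ>) s ` F \<subseteq> G - F"
    proof
      fix r assume "r \<in> (\<circ>) s ` F"
      then obtain p where p: "p \<in> F" and r: "r = s \<circ> p"
        by blast
      have "r \<in> G"
        using perm_group_comp[OF G s(1)] p by (simp add: r F_def)
      moreover have "r x = y"
        using p s(2) by (simp add: r F_def)
      ultimately show "r \<in> G - F"
        using \<open>x \<noteq> y\<close> by (simp add: F_def)
    qed
    show "(\<circ>) (inv s) ` (G - F) \<subseteq> F"
    proof
      fix r assume "r \<in> (\<circ>) (inv s) ` (G - F)"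
      then obtain q where q: "q \<in> G" "q \<notin> F" and r: "r = inv s \<circ> q"
        by blast
      have "q x = y" "q y = x"
        using swap[OF q] by simp_all
      then show "r \<in> F"
        using perm_group_comp[OF G perm_group_inv[OF G s(1)] q(1)] inv_s by (simp add: r F_def)
    qed
  qed
qed

lemma card_eq_double_pointwise_stabilizer:
  assumes G: "perm_group V G" and "finite V" and "x \<noteq> y"
    and stab: "\<forall>p\<in>G. p ` {x, y} = {x, y}" and s: "s \<in> G" "s x = y"
  shows "card G = 2 * card {p \<in> G. p x = x \<and> p y = y}"
proof -
  define F where "F = {p \<in> G. p x = x \<and> p y = y}"
  have "card (G - F) = card F"
    using bij_betw_same_card[OF bij_betw_comp_pointwise_stabilizer[OF assms(1,3-6)]]
    unfolding F_def by simp
  moreover have "finite G" "F \<subseteq> G"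
    using finite_perm_group[OF G \<open>finite V\<close>] by (auto simp: F_def)
  then have "card (G - F) = card G - card F" "card F \<le> card G"
    using card_Diff_subset[OF finite_subset] card_mono by blast+
  ultimately show ?thesis
    unfolding F_def[symmetric] by linarith
qed

lemma distinguishing_iff_pointwise_stabilizer:
  assumes "x \<in> V" and stab: "\<forall>p\<in>G. p ` {x, y} = {x, y}" and "\<phi> x \<noteq> \<phi> y"
  shows "distinguishing V G \<phi> \<longleftrightarrow> distinguishing V {p \<in> G. p x = x \<and> p y = y} \<phi>"
proof
  assume "distinguishing V G \<phi>"
  then show "distinguishing V {p \<in> G. p x = x \<and> p y = y} \<phi>"
    unfolding distinguishing_def by blast
next
  assume F: "distinguishing V {p \<in> G. p x = x \<and> p y = y} \<phi>"
  have "p x = x \<and> p y = y" if "p \<in> G" "preserves V p \<phi>" for p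
  proof -
    have "\<phi> (p x) = \<phi> x"
      using that(2) \<open>x \<in> V\<close> by (simp add: preserves_def)
    then have "p x \<noteq> y"
      using \<open>\<phi> x \<noteq> \<phi> y\<close> by auto
    moreover have "p x = x \<and> p y = y \<or> p x = y \<and> p y = x"
      using stab that(1) by (simp add: doubleton_eq_iff)
    ultimately show ?thesis
      by blast
  qed
  then show "distinguishing V G \<phi>"
    using F unfolding distinguishing_def by blast
qed

lemma preserves_fun_upd_iff:
  assumes "inj p" "p x = x" "p y = y"
  shows "preserves V p (\<phi>(x := a, y := b)) \<longleftrightarrow> preserves V p \<phi>"
proof -
  have "(\<phi>(x := a, y := b)) (p v) = (\<phi>(x := a, y := b)) v \<longleftrightarrow> \<phi> (p v) = \<phi> v" for v
  proof (cases "v = x \<or> v = y")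
    case True
    then show ?thesis
      using assms(2,3) by auto
  next
    case False
    then have "p v \<noteq> x" "p v \<noteq> y"
      using assms by (metis injD)+
    then show ?thesis
      using False by simp
  qed
  then show ?thesis
    unfolding preserves_def by simp
qed

lemma distinguishing_fun_upd_iff:
  assumes F: "perm_group V F" and pointwise: "\<forall>p\<in>F. p x = x \<and> p y = y"
  shows "distinguishing V F (\<phi>(x := a, y := b)) \<longleftrightarrow> distinguishing V F \<phi>"
proof -
  have "preserves V p (\<phi>(x := a, y := b)) \<longleftrightarrow> preserves V p \<phi>" if "p \<in> F" for p
    using preserves_fun_upd_iff[OF permutes_inj[OF perm_group_permutes[OF F that]]] pointwise that
    by simp
  then show ?thesis
    unfolding distinguishing_def by simp
qed

lemma fun_upd_in_labelings:
  assumes "\<phi> \<in> labelings V k" "x \<in> V" "a \<in> {1..k}"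
  shows "\<phi>(x := a) \<in> labelings V k"
  using PiE_fun_upd[of a "\<lambda>_. {1..k}" x \<phi> V] assms by (simp add: labelings_def insert_absorb)

lemma card_offdiagonal: "card (SIGMA a:{1..k}. {1..k} - {a}) = k * (k - 1)"
  by (simp add: card_SigmaI)

lemma bij_betw_reset_two_labels:
  assumes "x \<in> V" "y \<in> V" "x \<noteq> y" "k \<noteq> 0" and T: "T \<subseteq> labelings V k"
    and upd: "\<And>\<phi> a b. \<phi> \<in> T \<Longrightarrow> a \<in> {1..k} \<Longrightarrow> b \<in> {1..k} \<Longrightarrow> \<phi>(x := a, y := b) \<in> T"
  shows "bij_betw (\<lambda>\<phi>. ((\<phi> x, \<phi> y), \<phi>(x := 1, y := 1))) T
           (({1..k} \<times> {1..k}) \<times> {\<phi> \<in> T. \<phi> x = 1 \<and> \<phi> y = 1})"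
    (is "bij_betw ?f T (_ \<times> ?S)")
proof (rule bij_betw_byWitness[where f' = "\<lambda>((a, b), \<psi>). \<psi>(x := a, y := b)"])
  have one: "1 \<in> {1..k}"
    using \<open>k \<noteq> 0\<close> by simp
  have range: "\<phi> x \<in> {1..k}" "\<phi> y \<in> {1..k}" if "\<phi> \<in> T" for \<phi>
  proof -
    have "\<phi> \<in> V \<rightarrow>\<^sub>E {1..k}"
      using T that unfolding labelings_def by blast
    then show "\<phi> x \<in> {1..k}" "\<phi> y \<in> {1..k}"
      using assms(1,2) by (blast intro: PiE_mem)+
  qed
  show "\<forall>\<phi>\<in>T. (\<lambda>((a, b), \<psi>). \<psi>(x := a, y := b)) (?f \<phi>) = \<phi>"
    using \<open>x \<noteq> y\<close> by (simp add: fun_eq_iff)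
  show "\<forall>z\<in>({1..k} \<times> {1..k}) \<times> ?S. ?f ((\<lambda>((a, b), \<psi>). \<psi>(x := a, y := b)) z) = z"
    using \<open>x \<noteq> y\<close> by (auto simp: fun_eq_iff)
  show "?f ` T \<subseteq> ({1..k} \<times> {1..k}) \<times> ?S"
    using upd[OF _ one one] range \<open>x \<noteq> y\<close> by auto
  show "(\<lambda>((a, b), \<psi>). \<psi>(x := a, y := b)) ` (({1..k} \<times> {1..k}) \<times> ?S) \<subseteq> T"
    using upd by auto
qed

lemma card_labelings_separating:
  assumes "x \<in> V" "y \<in> V" "x \<noteq> y" and T: "T \<subseteq> labelings V k"
    and upd: "\<And>\<phi> a b. \<phi> \<in> T \<Longrightarrow> a \<in> {1..k} \<Longrightarrow> b \<in> {1..k} \<Longrightarrow> \<phi>(x := a, y := b) \<in> T"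
  shows "k * card {\<phi> \<in> T. \<phi> x \<noteq> \<phi> y} = (k - 1) * card T"
proof (cases "k = 0")
  case False
  define S where "S = {\<phi> \<in> T. \<phi> x = 1 \<and> \<phi> y = 1}"
  define f where "f \<phi> = ((\<phi> x, \<phi> y), \<phi>(x := 1, y := 1))" for \<phi> :: "'a \<Rightarrow> nat"
  have bij: "bij_betw f T (({1..k} \<times> {1..k}) \<times> S)"
    unfolding f_def S_def using bij_betw_reset_two_labels[OF assms(1-3) False T upd] .
  have "f ` {\<phi> \<in> T. \<phi> x \<noteq> \<phi> y} = {z \<in> f ` T. fst (fst z) \<noteq> snd (fst z)}"
    by (auto simp: f_def)
  also have "\<dots> = (SIGMA a:{1..k}. {1..k} - {a}) \<times> S"
    unfolding bij_betw_imp_surj_on[OF bij] by auto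
  finally have image_eq: "f ` {\<phi> \<in> T. \<phi> x \<noteq> \<phi> y} = (SIGMA a:{1..k}. {1..k} - {a}) \<times> S" .
  have "card {\<phi> \<in> T. \<phi> x \<noteq> \<phi> y} = card (f ` {\<phi> \<in> T. \<phi> x \<noteq> \<phi> y})"
    using inj_on_subset[OF bij_betw_imp_inj_on[OF bij]] by (simp add: card_image)
  also have "\<dots> = k * (k - 1) * card S"
    unfolding image_eq by (simp only: card_cartesian_product card_offdiagonal)
  finally have "card {\<phi> \<in> T. \<phi> x \<noteq> \<phi> y} = k * (k - 1) * card S" .
  moreover have "card T = k * k * card S"
    using bij_betw_same_card[OF bij] by (simp add: card_cartesian_product)
  ultimately show ?thesis
    by simp
qed simp

lemma card_separating_distinguishing:
  assumes F: "perm_group V F" and pointwise: "\<forall>p\<in>F. p x = x \<and> p y = y"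
    and "x \<in> V" "y \<in> V" "x \<noteq> y"
  shows "k * card {\<phi> \<in> labelings V k. distinguishing V F \<phi> \<and> \<phi> x \<noteq> \<phi> y}
    = (k - 1) * card {\<phi> \<in> labelings V k. distinguishing V F \<phi>}"
proof -
  have "k * card {\<phi> \<in> {\<phi> \<in> labelings V k. distinguishing V F \<phi>}. \<phi> x \<noteq> \<phi> y}
      = (k - 1) * card {\<phi> \<in> labelings V k. distinguishing V F \<phi>}"
  proof (rule card_labelings_separating[OF assms(3-5)])
    fix \<phi> a b assume "\<phi> \<in> {\<phi> \<in> labelings V k. distinguishing V F \<phi>}" "a \<in> {1..k}" "b \<in> {1..k}"
    then show "\<phi>(x := a, y := b) \<in> {\<phi> \<in> labelings V k. distinguishing V F \<phi>}"
      using assms(3,4) distinguishing_fun_upd_iff[OF F pointwise] by (simp add: fun_upd_in_labelings)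
  qed blast
  then show ?thesis
    by (simp add: conj_assoc)
qed

lemma card_Aut_set2:
  assumes "finite V" "x \<noteq> y" "Aut_set2 V E x y \<noteq> Aut_fix2 V E x y"
  shows "card (Aut_set2 V E x y) = 2 * card (Aut_fix2 V E x y)"
proof -
  obtain s where s: "s \<in> Aut_set2 V E x y" "\<not> (s x = x \<and> s y = y)"
    using assms(3) unfolding Aut_fix2_eq by blast
  then have "s x = y"
    using Aut_set2_stabilizes by (fastforce simp: doubleton_eq_iff)
  then show ?thesis
    unfolding Aut_fix2_eq
    by (rule card_eq_double_pointwise_stabilizer[OF perm_group_Aut_set2 assms(1,2) Aut_set2_stabilizes s(1)])
qed

lemma D_set2_eq_D1_add_D2:
  assumes "finite V" "x \<in> V" "y \<in> V"
  shows "D_set2 V E k x y = D1 V E k x y + D2 V E k x y"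
  unfolding D_set2_def D_def D1_def D2_def dist_classes_eq
  by (rule card_quotient_split[OF equiv_lab_equiv[OF perm_group_Aut_set2]
        eq_labels_respects_lab_equiv[OF assms(2,3) Aut_set2_stabilizes]])
    (simp add: finite_labelings[OF \<open>finite V\<close>])

lemma D2_eq_D_fix2:
  assumes "finite V" "x \<in> V" "y \<in> V" "x \<noteq> y" "Aut_set2 V E x y \<noteq> Aut_fix2 V E x y"
  shows "2 * k * D2 V E k x y = (k - 1) * D_fix2 V E k x y"
proof -
  define G where "G = Aut_set2 V E x y"
  define F where "F = Aut_fix2 V E x y"
  let ?R = "lab_equiv V G"
  have G: "perm_group V G" and F: "perm_group V F" and stab: "\<forall>p\<in>G. p ` {x, y} = {x, y}"
    unfolding G_def F_def by (rule perm_group_Aut_set2 perm_group_Aut_fix2 Aut_set2_stabilizes)+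
  have F_eq: "F = {p \<in> G. p x = x \<and> p y = y}"
    unfolding F_def G_def by (rule Aut_fix2_eq)
  have "card F \<noteq> 0"
    using perm_group_id[OF F] finite_perm_group[OF F \<open>finite V\<close>] by (auto simp: card_eq_0_iff)
  have sep: "(\<lambda>\<phi>. \<phi> x \<noteq> \<phi> y) respects ?R"
    using Not_respects[OF eq_labels_respects_lab_equiv[OF assms(2,3) stab]] .
  define B where "B = {\<phi> \<in> labelings V k. distinguishing V G \<phi> \<and> \<phi> x \<noteq> \<phi> y}"
  define A where "A = {\<phi> \<in> labelings V k. distinguishing V F \<phi>}"
  have "D2 V E k x y = card (B // ?R)"
    unfolding D2_def dist_classes_eq G_def[symmetric] quotient_filter[OF equiv_lab_equiv[OF G] sep]
    by (simp add: B_def conj_assoc)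
  then have card_B: "card B = D2 V E k x y * (2 * card F)"
    using card_distinguishing_eq_card_quotient_mult[OF G \<open>finite V\<close> sep] card_Aut_set2[OF assms(1,4,5)]
    unfolding B_def G_def F_def by simp
  have card_A: "card A = D_fix2 V E k x y * card F"
    using card_distinguishing_eq_card_quotient_mult[OF F \<open>finite V\<close>, of "\<lambda>_. True" k]
    unfolding D_fix2_def D_def dist_classes_eq F_def[symmetric] A_def
    by (simp add: congruentI)
  have "B = {\<phi> \<in> labelings V k. distinguishing V F \<phi> \<and> \<phi> x \<noteq> \<phi> y}"
    using distinguishing_iff_pointwise_stabilizer[OF \<open>x \<in> V\<close> stab] unfolding B_def F_eq by auto
  then have "k * card B = (k - 1) * card A"
    unfolding A_def using card_separating_distinguishing[OF F _ assms(2-4)] F_eq by simp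
  then have "card F * (2 * k * D2 V E k x y) = card F * ((k - 1) * D_fix2 V E k x y)"
    unfolding card_A card_B by (simp only: ac_simps)
  then show ?thesis
    using \<open>card F \<noteq> 0\<close> by simp
qed

theorem lemma14:
  fixes V :: "'a set" and E :: "'a \<Rightarrow> 'a \<Rightarrow> bool" and x y :: 'a and k :: nat
  assumes "graph V E" and "E x y"
    and "Aut_set2 V E x y \<noteq> Aut_fix2 V E x y"
    and "k \<ge> 1"
  shows "real (D2 V E k x y) = real (k choose 2) * real (D_fix2 V E k x y) / real k ^ 2
       \<and> real (D1 V E k x y) = real (D_set2 V E k x y) - (real k - 1) * real (D_fix2 V E k x y) / (2 * real k)"
proof -
  have fin: "finite V" and xy: "x \<in> V" "y \<in> V" "x \<noteq> y"
    using assms(1,2) unfolding graph_def by blast+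
  have split: "D_set2 V E k x y = D1 V E k x y + D2 V E k x y"
    by (rule D_set2_eq_D1_add_D2[OF fin xy(1,2)])
  have "2 * k * D2 V E k x y = (k - 1) * D_fix2 V E k x y"
    by (rule D2_eq_D_fix2[OF fin xy assms(3)])
  then have "2 * real k * real (D2 V E k x y) = (real k - 1) * real (D_fix2 V E k x y)"
    using \<open>k \<ge> 1\<close> by (metis of_nat_1 of_nat_diff of_nat_mult of_nat_numeral)
  then have D2: "real (D2 V E k x y) = (real k - 1) * real (D_fix2 V E k x y) / (2 * real k)"
    using \<open>k \<ge> 1\<close> by (simp add: field_simps)
  have choose: "real (k choose 2) = real k * (real k - 1) / 2"
    using \<open>k \<ge> 1\<close> by (simp add: choose_two real_of_nat_div of_nat_diff)
  have "real (k choose 2) * real (D_fix2 V E k x y) / real k ^ 2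
      = (real k - 1) * real (D_fix2 V E k x y) / (2 * real k)"
    unfolding choose using \<open>k \<ge> 1\<close> by (simp add: field_simps power2_eq_square)
  then show ?thesis
    using D2 split by simp
qed

end
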